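(* Let $D_V=\mathbb{C}[w_0,\dots,w_s]\langle\partial_{w_0},\dots,\partial_{w_s}\rangle$ and let $I\subset D_V$ be a left ideal that can be generated by finitely many elements of pure order. Put $M=D_V/I$. Then for all $k\in\mathbb{Z}$ and $p$, the natural map $$V^kD_V\cap F_pD_V\longrightarrow V^k_{ind}M\cap F^{ord}_pM$$ is surjective.
   Context: $F_\bullet D_V$ is the order filtration. $V^\bullet D_V$ is the $V$-filtration along $w_0=0$: $V^0D_V$ is spanned by the monomials $w^\gamma\partial_w^\delta$ with $\gamma_0\geq\delta_0$, $V^kD_V=w_0^kV^0D_V$ and $V^{-k}D_V=\sum_{j\ge0,\,j\le k}\partial_{w_0}^jV^0D_V$ for $k>0$ (so $V^kD_V$ is spanned by monomials with $\gamma_0-\delta_0\ge k$). $V^k_{ind}M=(V^kD_V+I)/I$, $F^{ord}_pM=(F_pD_V+I)/I$. An element $P=\sum c_{\gamma\delta}w^\gamma\partial_w^\delta$ (standard form) is of pure order $k$ if every monomial with $c_{\gamma\delta}\ne0$ lies in $V^kD_V$ and has nonzero class in $V^kD_V/V^{k+1}D_V$, i.e. $\gamma_0-\delta_0=k$ for all its monomials. *)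

theory Defs
  imports Complex_Main
begin

text \<open>The Weyl algebra D_V = C[w_0..w_s]<d_0..d_s>, elements written in standard
form sum c_{gamma,delta} w^gamma d^delta.\<close>

type_synonym mono = "(nat \<Rightarrow> nat) \<times> (nat \<Rightarrow> nat)"
type_synonym weyl = "mono \<Rightarrow> complex"

definition wsupp :: "weyl \<Rightarrow> mono set" where
  "wsupp P = {m. P m \<noteq> 0}"

definition Dv :: "nat \<Rightarrow> weyl set" where
  "Dv s = {P. finite (wsupp P) \<and>
              (\<forall>g d. P (g, d) \<noteq> 0 \<longrightarrow> (\<forall>i>s. g i = 0 \<and> d i = 0))}"

text \<open>Normal-ordering rule:
 (w^a d^b)(w^c d^e) = sum_{k <= b, k <= c} prod_i C(b_i,k_i) c_i!/(c_i-k_i)! w^(a+c-k) d^(b+e-k).\<close>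

definition wmult :: "nat \<Rightarrow> weyl \<Rightarrow> weyl \<Rightarrow> weyl" where
  "wmult s P Q = (\<lambda>(x, y).
     \<Sum>(a, b)\<in>wsupp P. \<Sum>(c, e)\<in>wsupp Q.
       \<Sum>k\<in>{k. \<forall>i. k i \<le> min (b i) (c i)}.
         (if x = (\<lambda>i. a i + c i - k i) \<and> y = (\<lambda>i. b i + e i - k i)
          then P (a, b) * Q (c, e) *
               of_nat (\<Prod>i\<le>s. (b i choose k i) * (fact (c i) div fact (c i - k i)))
          else 0))"

definition left_ideal :: "nat \<Rightarrow> weyl set \<Rightarrow> weyl set" where
  "left_ideal s G = {P. \<exists>Q. (\<forall>g\<in>G. Q g \<in> Dv s) \<and>
                          P = (\<lambda>m. \<Sum>g\<in>G. wmult s (Q g) g m)}"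

definition Vfilt :: "nat \<Rightarrow> int \<Rightarrow> weyl set" where
  "Vfilt s k = {P \<in> Dv s. \<forall>g d. P (g, d) \<noteq> 0 \<longrightarrow> int (g 0) - int (d 0) \<ge> k}"

definition Ffilt :: "nat \<Rightarrow> int \<Rightarrow> weyl set" where
  "Ffilt s p = {P \<in> Dv s. \<forall>g d. P (g, d) \<noteq> 0 \<longrightarrow> int (\<Sum>i\<le>s. d i) \<le> p}"

definition pure_order :: "weyl \<Rightarrow> int \<Rightarrow> bool" where
  "pure_order P k \<longleftrightarrow> (\<forall>g d. P (g, d) \<noteq> 0 \<longrightarrow> int (g 0) - int (d 0) = k)"

definition mclass :: "nat \<Rightarrow> weyl set \<Rightarrow> weyl \<Rightarrow> weyl set" where
  "mclass s I A = {B \<in> Dv s. B - A \<in> I}"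

definition Vind :: "nat \<Rightarrow> weyl set \<Rightarrow> int \<Rightarrow> weyl set set" where
  "Vind s I k = mclass s I ` Vfilt s k"

definition Ford :: "nat \<Rightarrow> weyl set \<Rightarrow> int \<Rightarrow> weyl set set" where
  "Ford s I p = mclass s I ` Ffilt s p"

end

theory Submission
  imports Defs "HOL-Library.Function_Algebras"
begin

text \<open>Let \<open>\<tau>\<^sub>k\<close> discard all monomials of V-degree \<open>\<gamma>\<^sub>0 - \<delta>\<^sub>0 < k\<close>. Normal ordering
  \<open>w\<^sup>a\<partial>\<^sup>b \<cdot> w\<^sup>c\<partial>\<^sup>e\<close> removes as many \<open>w\<^sub>0\<close> as \<open>\<partial>\<^sub>0\<close>, so V-degrees add under multiplication
  term by term. Hence for a generator \<open>g\<close> of pure order \<open>j\<close> one has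
  \<open>\<tau>\<^sub>k(Q g) = \<tau>\<^sub>k\<^sub>-\<^sub>j(Q) g\<close>, and \<open>\<tau>\<^sub>k\<close> maps \<open>I\<close> into itself. Given \<open>A \<in> V\<^sup>k\<close> and
  \<open>B \<in> F\<^sub>p\<close> with \<open>B - A \<in> I\<close>, the operator \<open>\<tau>\<^sub>k B\<close> lies in \<open>V\<^sup>k \<inter> F\<^sub>p\<close> and
  \<open>\<tau>\<^sub>k B - A = \<tau>\<^sub>k (B - A) \<in> I\<close>.\<close>

definition vdeg :: "mono \<Rightarrow> int" where
  "vdeg m = int (fst m 0) - int (snd m 0)"

definition vtrunc :: "int \<Rightarrow> weyl \<Rightarrow> weyl" where
  "vtrunc k P = (\<lambda>m. if k \<le> vdeg m then P m else 0)"

text \<open>\<open>wmult\<close> with the support of the left factor replaced by an arbitrary finite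
  superset \<open>S\<close>; for fixed \<open>S\<close> it is linear in the left factor.\<close>

definition wmult_on :: "nat \<Rightarrow> mono set \<Rightarrow> weyl \<Rightarrow> weyl \<Rightarrow> weyl" where
  "wmult_on s S P Q = (\<lambda>(x, y).
     \<Sum>(a, b)\<in>S. \<Sum>(c, e)\<in>wsupp Q.
       \<Sum>k\<in>{k. \<forall>i. k i \<le> min (b i) (c i)}.
         (if x = (\<lambda>i. a i + c i - k i) \<and> y = (\<lambda>i. b i + e i - k i)
          then P (a, b) * Q (c, e) *
               of_nat (\<Prod>i\<le>s. (b i choose k i) * (fact (c i) div fact (c i - k i)))
          else 0))"

lemma wmult_eq_wmult_on:
  assumes "finite S" "wsupp P \<subseteq> S"
  shows "wmult s P Q = wmult_on s S P Q"
  using assms unfolding wmult_def wmult_on_def wsupp_def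
  by (intro ext) (auto simp: split_def cong: if_cong intro!: sum.mono_neutral_left)

lemma wmult_diff_left:
  assumes "finite (wsupp P1)" "finite (wsupp P2)"
  shows "wmult s (P1 - P2) Q = wmult s P1 Q - wmult s P2 Q"
proof -
  let ?S = "wsupp P1 \<union> wsupp P2"
  have fin: "finite ?S" using assms by simp
  have "wsupp (P1 - P2) \<subseteq> ?S" by (auto simp: wsupp_def)
  then have "wmult s (P1 - P2) Q = wmult_on s ?S (P1 - P2) Q"
    by (rule wmult_eq_wmult_on[OF fin])
  also have "\<dots> = wmult_on s ?S P1 Q - wmult_on s ?S P2 Q"
    by (rule ext) (auto simp: wmult_on_def split_def sum_subtractf[symmetric] algebra_simps
                        intro!: sum.cong)
  also have "\<dots> = wmult s P1 Q - wmult s P2 Q"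
    using wmult_eq_wmult_on[OF fin, of P1] wmult_eq_wmult_on[OF fin, of P2] by simp
  finally show ?thesis .
qed

lemma Dv_finite_wsupp: "P \<in> Dv s \<Longrightarrow> finite (wsupp P)"
  by (simp add: Dv_def)

lemma zero_in_Dv: "0 \<in> Dv s"
  by (simp add: Dv_def wsupp_def)

lemma diff_in_Dv:
  assumes "P \<in> Dv s" "Q \<in> Dv s"
  shows "P - Q \<in> Dv s"
proof -
  have "wsupp (P - Q) \<subseteq> wsupp P \<union> wsupp Q" by (auto simp: wsupp_def)
  then have "finite (wsupp (P - Q))"
    using assms by (auto simp: Dv_def intro: finite_subset)
  moreover have "P (g, d) \<noteq> 0 \<or> Q (g, d) \<noteq> 0" if "(P - Q) (g, d) \<noteq> 0" for g d
    using that by auto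
  ultimately show ?thesis
    using assms unfolding Dv_def by blast
qed

lemma wmult_zero_left: "wmult s 0 Q = 0"
  by (rule ext) (simp add: wmult_def wsupp_def split_def)

lemma zero_in_left_ideal: "0 \<in> left_ideal s G"
  unfolding left_ideal_def
  by (intro CollectI exI[where x="\<lambda>_. 0"]) (auto simp: zero_in_Dv wmult_zero_left)

lemma diff_in_left_ideal:
  assumes "x \<in> left_ideal s G" "y \<in> left_ideal s G"
  shows "x - y \<in> left_ideal s G"
proof -
  obtain Q1 where Q1: "\<forall>g\<in>G. Q1 g \<in> Dv s" "x = (\<lambda>m. \<Sum>g\<in>G. wmult s (Q1 g) g m)"
    using assms(1) unfolding left_ideal_def by blast
  obtain Q2 where Q2: "\<forall>g\<in>G. Q2 g \<in> Dv s" "y = (\<lambda>m. \<Sum>g\<in>G. wmult s (Q2 g) g m)"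
    using assms(2) unfolding left_ideal_def by blast
  have "wmult s (Q1 g) g m - wmult s (Q2 g) g m = wmult s (Q1 g - Q2 g) g m" if "g \<in> G" for g m
  proof -
    have "finite (wsupp (Q1 g))" "finite (wsupp (Q2 g))"
      using that Q1(1) Q2(1) by (auto intro: Dv_finite_wsupp)
    then show ?thesis by (simp add: wmult_diff_left)
  qed
  then have "x - y = (\<lambda>m. \<Sum>g\<in>G. wmult s (Q1 g - Q2 g) g m)"
    unfolding Q1(2) Q2(2) by (auto simp: sum_subtractf[symmetric] intro!: sum.cong)
  moreover have "\<forall>g\<in>G. Q1 g - Q2 g \<in> Dv s"
    using Q1(1) Q2(1) by (simp add: diff_in_Dv)
  ultimately show ?thesis
    unfolding left_ideal_def by (intro CollectI exI[where x="\<lambda>g. Q1 g - Q2 g"]) simp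
qed

lemma mclass_eqI:
  assumes "0 \<in> I" and diff: "\<And>x y. x \<in> I \<Longrightarrow> y \<in> I \<Longrightarrow> x - y \<in> I"
    and "C - A \<in> I"
  shows "mclass s I C = mclass s I A"
proof -
  have "D - C \<in> I \<longleftrightarrow> D - A \<in> I" for D
  proof
    assume "D - C \<in> I"
    moreover have "0 - (C - A) \<in> I" using assms by blast
    ultimately have "(D - C) - (0 - (C - A)) \<in> I" by (rule diff)
    then show "D - A \<in> I" by simp
  next
    assume "D - A \<in> I"
    then have "(D - A) - (C - A) \<in> I" using assms(3) by (rule diff)
    then show "D - C \<in> I" by simp
  qed
  then show ?thesis by (auto simp: mclass_def)
qed

lemma vtrunc_in_Dv:
  assumes "P \<in> Dv s"
  shows "vtrunc k P \<in> Dv s"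
proof -
  have "wsupp (vtrunc k P) \<subseteq> wsupp P" by (auto simp: wsupp_def vtrunc_def)
  then show ?thesis
    using assms by (auto simp: Dv_def vtrunc_def intro: finite_subset split: if_splits)
qed

lemma vtrunc_in_Vfilt: "P \<in> Dv s \<Longrightarrow> vtrunc k P \<in> Vfilt s k"
  using vtrunc_in_Dv[of P s k] by (auto simp: Vfilt_def vtrunc_def vdeg_def split: if_splits)

lemma vtrunc_in_Ffilt: "P \<in> Ffilt s p \<Longrightarrow> vtrunc k P \<in> Ffilt s p"
  using vtrunc_in_Dv[of P s k] by (auto simp: Ffilt_def vtrunc_def split: if_splits)

lemma vtrunc_Vfilt: "P \<in> Vfilt s k \<Longrightarrow> vtrunc k P = P"
  by (rule ext) (force simp: Vfilt_def vtrunc_def vdeg_def)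

lemma vtrunc_diff: "vtrunc k (P - Q) = vtrunc k P - vtrunc k Q"
  by (rule ext) (simp add: vtrunc_def)

lemma vdeg_normal_ordered_product:
  assumes "\<forall>i. l i \<le> b i \<and> l i \<le> c i"
  shows "vdeg (\<lambda>i. a i + c i - l i, \<lambda>i. b i + e i - l i) = vdeg (a, b) + vdeg (c, e)"
proof -
  have "l 0 \<le> b 0" "l 0 \<le> c 0" using assms by auto
  then show ?thesis by (simp add: vdeg_def)
qed

lemma vtrunc_wmult_pure_order:
  assumes "finite (wsupp Q)" and "pure_order g j"
  shows "vtrunc k (wmult s Q g) = wmult s (vtrunc (k - j) Q) g"
proof -
  have "wsupp (vtrunc (k - j) Q) \<subseteq> wsupp Q" by (auto simp: wsupp_def vtrunc_def)
  then have rhs: "wmult s (vtrunc (k - j) Q) g = wmult_on s (wsupp Q) (vtrunc (k - j) Q) g"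
    by (rule wmult_eq_wmult_on[OF assms(1)])
  have vdeg_g: "vdeg (c, e) = j" if "(c, e) \<in> wsupp g" for c e
    using assms(2) that by (simp add: pure_order_def vdeg_def wsupp_def)
  show ?thesis unfolding rhs
  proof (rule ext, clarify)
    fix x y
    show "vtrunc k (wmult s Q g) (x, y) = wmult_on s (wsupp Q) (vtrunc (k - j) Q) g (x, y)"
    proof (cases "k \<le> vdeg (x, y)")
      case True
      then show ?thesis
        unfolding vtrunc_def wmult_def wmult_on_def
        using vdeg_normal_ordered_product vdeg_g
        by (auto simp: split_def intro!: sum.cong)
    next
      case False
      then show ?thesis
        unfolding vtrunc_def wmult_def wmult_on_def
        using vdeg_normal_ordered_product vdeg_g
        by (auto simp: split_def intro!: sum.neutral)
    qed
  qed
qed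

lemma vtrunc_in_left_ideal:
  assumes pure: "\<forall>g\<in>G. \<exists>j. pure_order g j" and "P \<in> left_ideal s G"
  shows "vtrunc k P \<in> left_ideal s G"
proof -
  obtain Q where Q: "\<forall>g\<in>G. Q g \<in> Dv s" "P = (\<lambda>m. \<Sum>g\<in>G. wmult s (Q g) g m)"
    using assms(2) unfolding left_ideal_def by blast
  obtain J where J: "\<forall>g\<in>G. pure_order g (J g)"
    using pure by metis
  have factor: "vtrunc k (wmult s (Q g) g) = wmult s (vtrunc (k - J g) (Q g)) g" if "g \<in> G" for g
    by (rule vtrunc_wmult_pure_order) (use that Q(1) J in \<open>auto intro: Dv_finite_wsupp\<close>)
  have "vtrunc k P = (\<lambda>m. \<Sum>g\<in>G. vtrunc k (wmult s (Q g) g) m)"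
    unfolding Q(2) by (simp add: vtrunc_def fun_eq_iff)
  also have "\<dots> = (\<lambda>m. \<Sum>g\<in>G. wmult s (vtrunc (k - J g) (Q g)) g m)"
    by (intro ext sum.cong refl) (simp add: factor)
  finally have "vtrunc k P = (\<lambda>m. \<Sum>g\<in>G. wmult s (vtrunc (k - J g) (Q g)) g m)" .
  moreover have "\<forall>g\<in>G. vtrunc (k - J g) (Q g) \<in> Dv s"
    using Q(1) by (simp add: vtrunc_in_Dv)
  ultimately show ?thesis
    unfolding left_ideal_def by (intro CollectI exI[where x="\<lambda>g. vtrunc (k - J g) (Q g)"]) simp
qed

theorem lemma2p15:
  fixes s :: nat and G :: "weyl set" and I :: "weyl set" and k p :: int
  assumes "finite G" and "G \<subseteq> Dv s"
    and "\<forall>g\<in>G. \<exists>j. pure_order g j"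
    and "I = left_ideal s G"
  shows "mclass s I ` (Vfilt s k \<inter> Ffilt s p) = Vind s I k \<inter> Ford s I p"
proof
  show "mclass s I ` (Vfilt s k \<inter> Ffilt s p) \<subseteq> Vind s I k \<inter> Ford s I p"
    by (auto simp: Vind_def Ford_def)
next
  have I0: "0 \<in> I" and I_diff: "\<And>x y. x \<in> I \<Longrightarrow> y \<in> I \<Longrightarrow> x - y \<in> I"
    using assms(4) by (simp_all add: zero_in_left_ideal diff_in_left_ideal)
  show "Vind s I k \<inter> Ford s I p \<subseteq> mclass s I ` (Vfilt s k \<inter> Ffilt s p)"
  proof
    fix X assume "X \<in> Vind s I k \<inter> Ford s I p"
    then obtain A B where A: "A \<in> Vfilt s k" "X = mclass s I A"
      and B: "B \<in> Ffilt s p" "X = mclass s I B"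
      by (auto simp: Vind_def Ford_def)
    have "B \<in> Dv s" using B(1) by (simp add: Ffilt_def)
    then have "B \<in> mclass s I B"
      using I0 by (simp add: mclass_def)
    then have "B \<in> mclass s I A"
      using A(2) B(2) by simp
    then have "vtrunc k (B - A) \<in> I"
      using assms(3,4) by (simp add: mclass_def vtrunc_in_left_ideal)
    then have "mclass s I (vtrunc k B) = X"
      using A by (simp add: vtrunc_diff vtrunc_Vfilt mclass_eqI[OF I0 I_diff])
    moreover have "vtrunc k B \<in> Vfilt s k \<inter> Ffilt s p"
      using \<open>B \<in> Dv s\<close> B(1) by (simp add: vtrunc_in_Vfilt vtrunc_in_Ffilt)
    ultimately show "X \<in> mclass s I ` (Vfilt s k \<inter> Ffilt s p)" by blast
  qed
qed

end
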